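(* Let $G$ be a bipartite graph that is not planar. Then there are no finite point sets $P,W$ in the plane with $P\cup W$ in general position such that $\mathrm{DG}^-(P,W)$ is isomorphic to $G$.
   Context: Let $P$ (the vertices) and $W$ (the witnesses) be finite point sets in $\mathbb{R}^2$; $P$ and $W$ may share points. The witness Delaunay graph $\mathrm{DG}^-(P,W)$ is the graph with vertex set $P$ in which distinct $x,y\in P$ are adjacent if and only if there is an open disk containing no point of $W$ whose bounding circle passes through $x$ and $y$. General position of $P\cup W$ means that no three distinct points of $P\cup W$ are collinear and no four distinct points of $P\cup W$ are concyclic. *)

theory Defs
  imports "HOL-Analysis.Analysis"
begin

type_synonym point = "real^2"

definition simple_graph :: "'a set \<Rightarrow> ('a \<Rightarrow> 'a \<Rightarrow> bool) \<Rightarrow> bool" where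
  "simple_graph V E \<longleftrightarrow>
     (\<forall>u v. E u v \<longrightarrow> u \<in> V \<and> v \<in> V \<and> u \<noteq> v \<and> E v u)"

definition bipartite :: "'a set \<Rightarrow> ('a \<Rightarrow> 'a \<Rightarrow> bool) \<Rightarrow> bool" where
  "bipartite V E \<longleftrightarrow> (\<exists>A B. A \<union> B = V \<and> A \<inter> B = {} \<and>
     (\<forall>u v. E u v \<longrightarrow> (u \<in> A \<and> v \<in> B) \<or> (u \<in> B \<and> v \<in> A)))"

definition graph_edges :: "'a set \<Rightarrow> ('a \<Rightarrow> 'a \<Rightarrow> bool) \<Rightarrow> 'a set set" where
  "graph_edges V E = {{u, v} | u v. u \<in> V \<and> v \<in> V \<and> E u v}"

definition planar :: "'a set \<Rightarrow> ('a \<Rightarrow> 'a \<Rightarrow> bool) \<Rightarrow> bool" where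
  "planar V E \<longleftrightarrow> (\<exists>(pos :: 'a \<Rightarrow> point) (\<gamma> :: 'a set \<Rightarrow> real \<Rightarrow> point).
     inj_on pos V \<and>
     (\<forall>u v. E u v \<longrightarrow>
        arc (\<gamma> {u, v}) \<and>
        {pathstart (\<gamma> {u, v}), pathfinish (\<gamma> {u, v})} = {pos u, pos v} \<and>
        path_image (\<gamma> {u, v}) \<inter> pos ` V = {pos u, pos v}) \<and>
     (\<forall>e\<in>graph_edges V E. \<forall>e'\<in>graph_edges V E. e \<noteq> e' \<longrightarrow>
        path_image (\<gamma> e) \<inter> path_image (\<gamma> e') = pos ` (e \<inter> e')))"

definition concyclic :: "point set \<Rightarrow> bool" where
  "concyclic S \<longleftrightarrow> (\<exists>c r. \<forall>p\<in>S. dist c p = r)"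

definition general_position :: "point set \<Rightarrow> bool" where
  "general_position S \<longleftrightarrow>
     (\<forall>T\<subseteq>S. card T = 3 \<longrightarrow> \<not> collinear T) \<and>
     (\<forall>T\<subseteq>S. card T = 4 \<longrightarrow> \<not> concyclic T)"

text \<open>Adjacency in the witness Delaunay graph DG^-(P,W) (for x, y in P).\<close>
definition wdg_adj :: "point set \<Rightarrow> point \<Rightarrow> point \<Rightarrow> bool" where
  "wdg_adj W x y \<longleftrightarrow> x \<noteq> y \<and>
     (\<exists>c r. dist c x = r \<and> dist c y = r \<and> ball c r \<inter> W = {})"

definition iso_to_wdg :: "'a set \<Rightarrow> ('a \<Rightarrow> 'a \<Rightarrow> bool) \<Rightarrow> point set \<Rightarrow> point set \<Rightarrow> bool" where
  "iso_to_wdg V E P W \<longleftrightarrow> (\<exists>f. bij_betw f V P \<and>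
     (\<forall>u\<in>V. \<forall>v\<in>V. E u v \<longleftrightarrow> wdg_adj W (f u) (f v)))"

end

theory Submission imports Defs begin

(* Suppose the bipartite graph (V,E) is isomorphic, via f, to DG^-(P,W).
   Bipartite graphs are triangle-free, and we show that for a triangle-free witness
   Delaunay graph the straight-line drawing (each vertex u at f u, each edge as the
   segment between its endpoints) is a plane drawing, so (V,E) would be planar.
   Two geometric facts about empty disks drive this:
   (1) if the circle of an empty disk passes through a and c lies in the closed disk,
       then a and c are adjacent (shrink the disk towards a);
   (2) if chords ab and cd of two circles cross, then some endpoint of one chord lies
       in the closed disk of the other circle (radical-axis argument).
   By (1), a vertex on the segment of an edge uv would be adjacent to u and v, and
   two edges with a common end overlapping beyond it would likewise form a triangle;
   by (1) and (2), two crossing disjoint edges would also produce a triangle. *)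

section \<open>Geometry of disks and segments\<close>

text \<open>Shrinking a disk towards a boundary point a: if c lies in the closed disk and
  c \<noteq> a, some circle through a and c bounds an open disk inside the original one.\<close>
lemma shrink_ball_to_chord:
  fixes m a c :: "'a::real_inner"
  assumes ma: "dist m a = r" and mc: "dist m c \<le> r" and ca: "c \<noteq> a"
  obtains m' r' where "dist m' a = r'" "dist m' c = r'" "ball m' r' \<subseteq> ball m r"
proof -
  define q where "q = inner (c - a) (m - a)"
  define n where "n = inner (c - a) (c - a)"
  have n_pos: "n > 0" using ca unfolding n_def by simp
  have r_nonneg: "r \<ge> 0" using ma by auto
  have ma2: "inner (m - a) (m - a) = r\<^sup>2"
    using ma by (metis dist_norm power2_norm_eq_inner)
  have "inner (c - m) (c - m) \<le> r\<^sup>2"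
    using mc r_nonneg by (metis dist_commute dist_norm power2_norm_eq_inner power_mono zero_le_dist)
  moreover have "inner (c - m) (c - m) = n - 2 * q + inner (m - a) (m - a)"
    unfolding n_def q_def
    by (simp add: inner_diff_left inner_diff_right inner_commute)
  ultimately have qn: "2 * q \<ge> n" using ma2 by simp
  hence q_pos: "q > 0" using n_pos by simp
  text \<open>The new centre is a + t (m - a), equidistant from a and c.\<close>
  define t where "t = n / (2 * q)"
  have t_pos: "t > 0" and t_le1: "t \<le> 1" using n_pos q_pos qn unfolding t_def by auto
  have tq: "2 * t * q = n" unfolding t_def using q_pos by simp
  define m' where "m' = a + t *\<^sub>R (m - a)"
  have m'a: "dist m' a = t * r"
    unfolding m'_def using ma t_pos by (simp add: dist_norm norm_minus_commute)
  have "inner (m' - c) (m' - c) = t\<^sup>2 * inner (m - a) (m - a) - 2 * t * q + n"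
    unfolding m'_def n_def q_def
    by (simp add: inner_diff_left inner_diff_right inner_add_left inner_add_right
        inner_commute power2_eq_square algebra_simps)
  also have "\<dots> = (t * r)\<^sup>2" using tq ma2 by (simp add: power_mult_distrib)
  finally have m'c: "dist m' c = t * r"
    using t_pos r_nonneg
    by (metis dist_norm norm_eq_sqrt_inner real_sqrt_abs abs_of_nonneg mult_nonneg_nonneg less_imp_le)
  have "m - m' = (1 - t) *\<^sub>R (m - a)" unfolding m'_def by (simp add: algebra_simps)
  hence mm': "dist m m' = (1 - t) * r"
    using ma t_le1 by (simp add: dist_norm norm_minus_commute)
  have "ball m' (t * r) \<subseteq> ball m r"
  proof
    fix x assume "x \<in> ball m' (t * r)"
    hence "dist m x < r" using dist_triangle[of m x m'] mm' by (simp add: algebra_simps)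
    thus "x \<in> ball m r" by simp
  qed
  with m'a m'c show ?thesis by (rule that)
qed

text \<open>The power difference g is
  affine, negative at a, b and positive at c, d if the claim fails.\<close>
lemma crossing_chords_endpoint_in_disk:
  fixes m1 m2 a b c d p :: "'a::real_inner"
  assumes "dist m1 a = r1" "dist m1 b = r1" "dist m2 c = r2" "dist m2 d = r2"
    and "p \<in> closed_segment a b" "p \<in> closed_segment c d"
  shows "dist m1 c \<le> r1 \<or> dist m1 d \<le> r1 \<or> dist m2 a \<le> r2 \<or> dist m2 b \<le> r2"
proof (rule ccontr)
  assume far: "\<not> ?thesis"
  define g where
    "g x = 2 * inner x (m2 - m1) + (inner m1 m1 - inner m2 m2 - r1\<^sup>2 + r2\<^sup>2)" for x :: 'a
  have sq: "inner (x - m) (x - m) = (dist m x)\<^sup>2" for x m :: 'a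
    by (metis dist_commute dist_norm power2_norm_eq_inner)
  have g_power: "g x = ((dist m1 x)\<^sup>2 - r1\<^sup>2) - ((dist m2 x)\<^sup>2 - r2\<^sup>2)" for x
    unfolding g_def sq[symmetric]
    by (simp add: inner_diff_left inner_diff_right inner_commute algebra_simps)
  have g_affine: "g ((1 - u) *\<^sub>R x + u *\<^sub>R y) = (1 - u) * g x + u * g y" for u x y
    unfolding g_def by (simp add: inner_add_left algebra_simps)
  have "r1 \<ge> 0" "r2 \<ge> 0" using assms by auto
  have sq_less: "r < dist m x \<Longrightarrow> 0 \<le> r \<Longrightarrow> r\<^sup>2 < (dist m x)\<^sup>2" for r m x :: _
    by (simp add: power_strict_mono)
  have "g a < 0" "g b < 0" "g c > 0" "g d > 0"
    using far \<open>r1 \<ge> 0\<close> \<open>r2 \<ge> 0\<close> sq_less[of r2 m2 a] sq_less[of r2 m2 b]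
      sq_less[of r1 m1 c] sq_less[of r1 m1 d] assms(1-4)
    by (auto simp: g_power)
  obtain u where u: "0 \<le> u" "u \<le> 1" "p = (1 - u) *\<^sub>R a + u *\<^sub>R b"
    using assms(5) unfolding closed_segment_def by auto
  obtain v where v: "0 \<le> v" "v \<le> 1" "p = (1 - v) *\<^sub>R c + v *\<^sub>R d"
    using assms(6) unfolding closed_segment_def by auto
  have "g p < 0" unfolding u(3) g_affine
    using convex_bound_lt[of "g a" 0 "g b" "1 - u" u] u \<open>g a < 0\<close> \<open>g b < 0\<close> by simp
  moreover have "g p > 0" unfolding v(3) g_affine
    using convex_bound_lt[of "- g c" 0 "- g d" "1 - v" v] v \<open>g c > 0\<close> \<open>g d > 0\<close> by simp
  ultimately show False by simp
qed

lemma closed_segments_common_start_nested: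
  fixes x y z p :: "'a::real_vector"
  assumes "p \<in> closed_segment x y" "p \<in> closed_segment x z" "p \<noteq> x"
  shows "y \<in> closed_segment x z \<or> z \<in> closed_segment x y"
proof -
  have nested: "y \<in> closed_segment x z"
    if "s *\<^sub>R (y - x) = t *\<^sub>R (z - x)" "0 < t" "t \<le> s" for s t :: real and y z :: 'a
  proof -
    have "s \<noteq> 0" using that by simp
    have "y - x = inverse s *\<^sub>R (s *\<^sub>R (y - x))" using \<open>s \<noteq> 0\<close> by simp
    also have "\<dots> = (t / s) *\<^sub>R (z - x)" using that(1) by (simp add: divide_inverse mult.commute)
    finally have "y - x = (t / s) *\<^sub>R (z - x)" .
    hence "y = (1 - t / s) *\<^sub>R x + (t / s) *\<^sub>R z" by (simp add: algebra_simps)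
    moreover have "0 \<le> t / s" "t / s \<le> 1" using that by auto
    ultimately show ?thesis unfolding closed_segment_def by blast
  qed
  obtain s where s: "0 \<le> s" "s \<le> 1" "p = (1 - s) *\<^sub>R x + s *\<^sub>R y"
    using assms(1) unfolding closed_segment_def by auto
  obtain t where t: "0 \<le> t" "t \<le> 1" "p = (1 - t) *\<^sub>R x + t *\<^sub>R z"
    using assms(2) unfolding closed_segment_def by auto
  have "s > 0" "t > 0" using s t assms(3) by (auto simp: order_le_less)
  have eq: "s *\<^sub>R (y - x) = t *\<^sub>R (z - x)" using s(3) t(3) by (simp add: algebra_simps)
  show ?thesis
    using nested[OF eq \<open>t > 0\<close>] nested[OF eq[symmetric] \<open>s > 0\<close>] by linarith
qed

section \<open>Adjacency in witness Delaunay graphs\<close>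

lemma wdg_adj_sym: "wdg_adj W x y \<longleftrightarrow> wdg_adj W y x"
  unfolding wdg_adj_def by blast

lemma wdg_adj_in_empty_disk:
  assumes "dist m a = r" "ball m r \<inter> W = {}" "dist m c \<le> r" "c \<noteq> a"
  shows "wdg_adj W a c"
proof -
  obtain m' r' where "dist m' a = r'" "dist m' c = r'" "ball m' r' \<subseteq> ball m r"
    using shrink_ball_to_chord[OF assms(1,3,4)] .
  with assms(2,4) show ?thesis unfolding wdg_adj_def by blast
qed

lemma wdg_adj_segment_point:
  assumes "wdg_adj W a b" "z \<in> closed_segment a b" "z \<noteq> a" "z \<noteq> b"
  shows "wdg_adj W a z \<and> wdg_adj W b z"
proof -
  obtain m r where disk: "dist m a = r" "dist m b = r" "ball m r \<inter> W = {}"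
    using assms(1) unfolding wdg_adj_def by blast
  have "closed_segment a b \<subseteq> cball m r"
    by (rule closed_segment_subset) (use disk in auto)
  hence "dist m z \<le> r" using assms(2) by auto
  thus ?thesis
    using wdg_adj_in_empty_disk[OF disk(1,3)] wdg_adj_in_empty_disk[OF disk(2,3)] assms(3,4)
    by auto
qed

lemma wdg_crossing_edges:
  assumes "wdg_adj W a b" "wdg_adj W c d"
    and "c \<noteq> a" "c \<noteq> b" "d \<noteq> a" "d \<noteq> b"
    and "p \<in> closed_segment a b" "p \<in> closed_segment c d"
  shows "(wdg_adj W c a \<and> wdg_adj W c b) \<or> (wdg_adj W d a \<and> wdg_adj W d b) \<or>
         (wdg_adj W a c \<and> wdg_adj W a d) \<or> (wdg_adj W b c \<and> wdg_adj W b d)"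
proof -
  obtain m1 r1 where disk1: "dist m1 a = r1" "dist m1 b = r1" "ball m1 r1 \<inter> W = {}"
    using assms(1) unfolding wdg_adj_def by blast
  obtain m2 r2 where disk2: "dist m2 c = r2" "dist m2 d = r2" "ball m2 r2 \<inter> W = {}"
    using assms(2) unfolding wdg_adj_def by blast
  from crossing_chords_endpoint_in_disk[OF disk1(1,2) disk2(1,2) assms(7,8)] show ?thesis
    using wdg_adj_in_empty_disk[OF disk1(1,3)] wdg_adj_in_empty_disk[OF disk1(2,3)]
      wdg_adj_in_empty_disk[OF disk2(1,3)] wdg_adj_in_empty_disk[OF disk2(2,3)] assms(3-6)
    by (metis wdg_adj_sym)
qed

definition triangle_free :: "('a \<Rightarrow> 'a \<Rightarrow> bool) \<Rightarrow> bool" where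
  "triangle_free E \<longleftrightarrow> (\<forall>u v w. \<not> (E u v \<and> E v w \<and> E u w))"

lemma bipartite_triangle_free:
  assumes "bipartite V E"
  shows "triangle_free E"
  unfolding triangle_free_def
proof (intro allI notI)
  fix u v w assume uvw: "E u v \<and> E v w \<and> E u w"
  obtain A B where "A \<inter> B = {}"
    and sides: "\<And>u v. E u v \<Longrightarrow> (u \<in> A \<and> v \<in> B) \<or> (u \<in> B \<and> v \<in> A)"
    using assms unfolding bipartite_def by blast
  with sides[of u v] sides[of v w] sides[of u w] uvw show False by blast
qed

definition straight_line_plane_drawing ::
    "'a set \<Rightarrow> ('a \<Rightarrow> 'a \<Rightarrow> bool) \<Rightarrow> ('a \<Rightarrow> point) \<Rightarrow> bool" where
  "straight_line_plane_drawing V E pos \<longleftrightarrow> inj_on pos V \<and>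
     (\<forall>u v. E u v \<longrightarrow> closed_segment (pos u) (pos v) \<inter> pos ` V = {pos u, pos v}) \<and>
     (\<forall>a b c d. E a b \<longrightarrow> E c d \<longrightarrow> {a, b} \<noteq> {c, d} \<longrightarrow>
        closed_segment (pos a) (pos b) \<inter> closed_segment (pos c) (pos d) = pos ` ({a, b} \<inter> {c, d}))"

text \<open>Drawing an edge {u,v} as the line segment between its endpoints, listed in an
  arbitrary but fixed order.\<close>
definition segment_path :: "('a \<Rightarrow> point) \<Rightarrow> 'a set \<Rightarrow> real \<Rightarrow> point" where
  "segment_path pos e = (case SOME (x, y). e = {x, y} of (x, y) \<Rightarrow> linepath (pos x) (pos y))"

lemma segment_path_doubleton:
  assumes "inj_on pos V" "u \<in> V" "v \<in> V" "u \<noteq> v"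
  shows "arc (segment_path pos {u, v})"
    and "{pathstart (segment_path pos {u, v}), pathfinish (segment_path pos {u, v})} = {pos u, pos v}"
    and "path_image (segment_path pos {u, v}) = closed_segment (pos u) (pos v)"
proof -
  obtain x y where xy: "(SOME (x, y). {u, v} = {x, y}) = (x, y)" by fastforce
  have "{u, v} = {x, y}"
    using someI[of "\<lambda>(x, y). {u, v} = {x, y}" "(u, v)"] xy by simp
  hence uv: "(x = u \<and> y = v) \<or> (x = v \<and> y = u)" by (metis doubleton_eq_iff)
  have path: "segment_path pos {u, v} = linepath (pos x) (pos y)"
    unfolding segment_path_def xy by simp
  have "pos u \<noteq> pos v" using assms by (meson inj_onD)
  with uv show "arc (segment_path pos {u, v})"
    and "{pathstart (segment_path pos {u, v}), pathfinish (segment_path pos {u, v})} = {pos u, pos v}"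
    and "path_image (segment_path pos {u, v}) = closed_segment (pos u) (pos v)"
    unfolding path by (auto simp: closed_segment_commute)
qed

lemma planar_if_straight_line_plane_drawing:
  assumes "simple_graph V E" "straight_line_plane_drawing V E pos"
  shows "planar V E"
proof -
  have edge: "u \<in> V \<and> v \<in> V \<and> u \<noteq> v" if "E u v" for u v
    using assms(1) that unfolding simple_graph_def by blast
  have inj: "inj_on pos V"
    and no_vertex: "\<And>u v. E u v \<Longrightarrow> closed_segment (pos u) (pos v) \<inter> pos ` V = {pos u, pos v}"
    and meet: "\<And>a b c d. E a b \<Longrightarrow> E c d \<Longrightarrow> {a, b} \<noteq> {c, d} \<Longrightarrow>
        closed_segment (pos a) (pos b) \<inter> closed_segment (pos c) (pos d) = pos ` ({a, b} \<inter> {c, d})"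
    using assms(2) unfolding straight_line_plane_drawing_def by blast+
  note seg = segment_path_doubleton[OF inj]
  show ?thesis
    unfolding planar_def
  proof (intro exI[of _ pos] exI[of _ "segment_path pos"] conjI allI impI ballI inj)
    fix u v assume "E u v"
    with edge seg no_vertex
    show "arc (segment_path pos {u, v})"
      and "{pathstart (segment_path pos {u, v}), pathfinish (segment_path pos {u, v})} = {pos u, pos v}"
      and "path_image (segment_path pos {u, v}) \<inter> pos ` V = {pos u, pos v}"
      by metis+
  next
    fix e e' assume "e \<in> graph_edges V E" "e' \<in> graph_edges V E" "e \<noteq> e'"
    then obtain a b c d where "e = {a, b}" "E a b" "e' = {c, d}" "E c d"
      unfolding graph_edges_def by blast
    with edge seg meet \<open>e \<noteq> e'\<close>
    show "path_image (segment_path pos e) \<inter> path_image (segment_path pos e') = pos ` (e \<inter> e')"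
      by metis
  qed
qed

section \<open>Triangle-free witness Delaunay graphs are drawn without crossings\<close>

locale triangle_free_wdg_realisation =
  fixes V :: "'a set" and E :: "'a \<Rightarrow> 'a \<Rightarrow> bool" and W :: "point set" and f :: "'a \<Rightarrow> point"
  assumes simple: "simple_graph V E"
    and triangle_free: "triangle_free E"
    and inj: "inj_on f V"
    and realises: "\<And>u v. u \<in> V \<Longrightarrow> v \<in> V \<Longrightarrow> E u v \<longleftrightarrow> wdg_adj W (f u) (f v)"
begin

lemma edge_vertices: "E u v \<Longrightarrow> u \<in> V \<and> v \<in> V \<and> u \<noteq> v \<and> E v u"
  using simple unfolding simple_graph_def by blast

lemma edge_adj: "E u v \<Longrightarrow> wdg_adj W (f u) (f v)"
  using realises edge_vertices by blast

lemma no_triangle: "E u v \<Longrightarrow> E v w \<Longrightarrow> E u w \<Longrightarrow> False"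
  using triangle_free unfolding triangle_free_def by blast

lemma f_eq_iff: "u \<in> V \<Longrightarrow> v \<in> V \<Longrightarrow> f u = f v \<longleftrightarrow> u = v"
  using inj by (meson inj_onD)

text \<open>No vertex lies on the segment of an edge other than its endpoints: otherwise it
  would be adjacent to both of them.\<close>
lemma edge_segment_vertices:
  assumes "E u v"
  shows "closed_segment (f u) (f v) \<inter> f ` V = {f u, f v}"
proof (intro equalityI subsetI)
  fix z assume z: "z \<in> closed_segment (f u) (f v) \<inter> f ` V"
  then obtain w where "w \<in> V" "z = f w" by auto
  show "z \<in> {f u, f v}"
  proof (rule ccontr)
    assume "z \<notin> {f u, f v}"
    with wdg_adj_segment_point[OF edge_adj[OF assms]] z
    have "wdg_adj W (f u) (f w) \<and> wdg_adj W (f v) (f w)" using \<open>z = f w\<close> by auto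
    hence "E u w" "E v w" using realises \<open>w \<in> V\<close> edge_vertices[OF assms] by auto
    thus False using no_triangle[of u v w] assms by blast
  qed
qed (use assms edge_vertices in auto)

text \<open>Two edges xy and xz meet only at x: otherwise the segments overlap, one of y, z
  lies on the other's edge segment, and a triangle appears.\<close>
lemma adjacent_edges_meet_at_common_end:
  assumes "E x y" "E x z" "y \<noteq> z"
    and "p \<in> closed_segment (f x) (f y)" "p \<in> closed_segment (f x) (f z)"
  shows "p = f x"
proof (rule ccontr)
  assume "p \<noteq> f x"
  have "x \<in> V" "y \<in> V" "z \<in> V" using assms(1,2) edge_vertices by auto
  have yz: "E y z" if "E x y" "E x z" "y \<noteq> z" "f z \<in> closed_segment (f x) (f y)" for y z
    using edge_segment_vertices[OF that(1)] that \<open>x \<in> V\<close> edge_vertices f_eq_iff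
    by (metis IntI image_eqI insertE singletonD)
  from closed_segments_common_start_nested[OF assms(4,5) \<open>p \<noteq> f x\<close>]
  have "E y z \<or> E z y" using yz assms(1-3) by metis
  thus False using no_triangle assms(1,2) edge_vertices by metis
qed

lemma disjoint_edges_do_not_cross:
  assumes "E a b" "E c d" "{a, b} \<inter> {c, d} = {}"
  shows "closed_segment (f a) (f b) \<inter> closed_segment (f c) (f d) = {}"
proof (rule ccontr)
  assume "closed_segment (f a) (f b) \<inter> closed_segment (f c) (f d) \<noteq> {}"
  then obtain p where p: "p \<in> closed_segment (f a) (f b)" "p \<in> closed_segment (f c) (f d)"
    by blast
  have V: "a \<in> V" "b \<in> V" "c \<in> V" "d \<in> V" using assms edge_vertices by auto
  have "f c \<noteq> f a" "f c \<noteq> f b" "f d \<noteq> f a" "f d \<noteq> f b"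
    using assms(3) V f_eq_iff by auto
  from wdg_crossing_edges[OF edge_adj[OF assms(1)] edge_adj[OF assms(2)] this p]
  have "(E c a \<and> E c b) \<or> (E d a \<and> E d b) \<or> (E a c \<and> E a d) \<or> (E b c \<and> E b d)"
    using realises V by blast
  thus False using no_triangle assms(1,2) edge_vertices by metis
qed

lemma edge_segments_meet:
  assumes "E a b" "E c d" "{a, b} \<noteq> {c, d}"
  shows "closed_segment (f a) (f b) \<inter> closed_segment (f c) (f d) = f ` ({a, b} \<inter> {c, d})"
proof (cases "{a, b} \<inter> {c, d} = {}")
  case True
  with disjoint_edges_do_not_cross[OF assms(1,2)] show ?thesis by simp
next
  case False
  have common: "closed_segment (f x) (f y) \<inter> closed_segment (f x) (f z) = f ` ({x, y} \<inter> {x, z})"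
    if "E x y" "E x z" "y \<noteq> z" for x y z
  proof -
    have "x \<noteq> y" "x \<noteq> z" using that edge_vertices by auto
    hence "{x, y} \<inter> {x, z} = {x}" using \<open>y \<noteq> z\<close> by auto
    thus ?thesis using adjacent_edges_meet_at_common_end[OF that] by auto
  qed
  have sym: "E b a" "E d c" using assms edge_vertices by auto
  from False consider "a = c" | "a = d" | "b = c" | "b = d" by blast
  then show ?thesis
  proof cases
    case 1
    with common[of a b d] assms show ?thesis by auto
  next
    case 2
    with common[of a b c] assms sym show ?thesis
      by (auto simp: insert_commute closed_segment_commute)
  next
    case 3
    with common[of b a d] assms sym show ?thesis
      by (auto simp: insert_commute closed_segment_commute)
  next
    case 4
    with common[of b a c] assms sym show ?thesis
      by (auto simp: insert_commute closed_segment_commute)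
  qed
qed

lemma straight_line_plane_drawing: "straight_line_plane_drawing V E f"
  unfolding straight_line_plane_drawing_def
  using inj edge_segment_vertices edge_segments_meet by blast

end

theorem mainTheorem7:
  fixes V :: "'a set" and E :: "'a \<Rightarrow> 'a \<Rightarrow> bool"
  assumes "simple_graph V E" and "bipartite V E" and "\<not> planar V E"
  shows "\<not> (\<exists>P W. finite P \<and> finite W \<and> general_position (P \<union> W) \<and> iso_to_wdg V E P W)"
proof
  assume "\<exists>P W. finite P \<and> finite W \<and> general_position (P \<union> W) \<and> iso_to_wdg V E P W"
  then obtain P W f where "bij_betw f V P"
    and "\<forall>u\<in>V. \<forall>v\<in>V. E u v \<longleftrightarrow> wdg_adj W (f u) (f v)"
    unfolding iso_to_wdg_def by blast
  then interpret triangle_free_wdg_realisation V E W f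
    using assms(1) bipartite_triangle_free[OF assms(2)]
    by unfold_locales (auto dest: bij_betw_imp_inj_on)
  have "planar V E"
    using planar_if_straight_line_plane_drawing[OF assms(1) straight_line_plane_drawing] .
  with assms(3) show False by contradiction
qed

end
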